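(* Let $f$ be a function on $\Omega_+$ depending only on $\zeta_0,\dots,\zeta_{m-1}$ ($m\ge1$), written as $f=\sum_{\gamma\subset\{0,\dots,m-1\}}f_\gamma\Psi_\gamma$. Then $G^{(f)}\in\mathcal H_M$ and $$\|G^{(f)}\|_M\le C\max_{\gamma\subset\{0,\dots,m-1\}}|f_\gamma|\,(1+\mu_* )^m,$$ where $C>0$ is a constant independent of $f$ and $m$.
   Context: Model. Fix $d\ge1$. $(X_t,\xi_t)_{t\in\mathbb{Z}_+}$ is a Markov chain with $X_t\in\mathbb{Z}^d$, $X_0=0$, $\xi_t\in\Omega:=\{-1,+1\}^{\mathbb{Z}^d}$. Given $X_t=x,\xi_t=\bar\xi$, the next position and the next environment are conditionally independent; $P(X_{t+1}=x+u\mid X_t=x,\xi_t=\bar\xi)=P_0(u)+\epsilon c(u)\bar\xi(x)$, where $\epsilon>0$, $P_0$ is an even, finite-range probability distribution on $\mathbb{Z}^d$ with $|\sum_u P_0(u)e^{i(\lambda,u)}|=1$ iff $\lambda=0$ and such that $1/\tilde p_0(\lambda)$ (with $\tilde p_0(\lambda)=\sum_u P_0(u)e^{i(\lambda,u)}$) has absolutely summable Fourier coefficients, and $c$ is an odd finite-range real function with $P_0(u)\pm\epsilon c(u)\in[0,1)$. Given $X_t=x,\xi_t=\bar\xi$, the values $\xi_{t+1}(y)$, $y\in\mathbb{Z}^d$, are independent with $P(\xi_{t+1}(y)=s)=Q_0(\bar\xi(y),s)$ if $y\ne x$ and $Q_1(\bar\xi(y),s)$ if $y=x$, where $Q_0,Q_1$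 are symmetric $2\times2$ stochastic matrices, $Q_0$ has eigenvalues $1,\mu$ with $0<|\mu|<1$, and $Q_1-Q_0=O(\epsilon)$. The environment seen from the walk, $\eta_t(x)=\xi_t(X_t+x)$, is a Markov chain on $\Omega$ with stochastic operator $(\mathcal T f)(\bar\eta)=\mathcal E[f(\eta_{t+1})\mid\eta_t=\bar\eta]$. $\Pi_0$ is the product of uniform measures on $\{\pm1\}$. For finite $\Gamma\subset\mathbb{Z}^d$ let $\Phi_\Gamma(\eta)=\prod_{x\in\Gamma}\eta(x)$, $\Phi_\emptyset=1$; each $f\in L^2(\Omega,\Pi_0)$ is written $f=\sum_\Gamma f_\Gamma\Phi_\Gamma$. For a fixed $M>1$, $\mathcal H_M=\{f:\|f\|_M:=\sum_\Gamma|f_\Gamma|M^{|\Gamma|}<\infty\}$. Standing assumptions (valid for $\epsilon,|\mu|$ small): $\mathcal T$ maps $\mathcal H_M$ into itself; the chain $(\eta_t)$ has an invariant probability measure $\Pi$, absolutely continuous w.r.t. $\Pi_0$ with bounded density; there is $\bar\mu\in(0,1)$ with $\|\mathcal T f\|_M\le\bar\mu\|f\|_M$ for all $f\in\widehat{\mathcal H}_M:=\{f\in\mathcal H_M:\int f\,d\Pi=0\}$. The dynamics and $\Pi$ are invariant under the global spin flip $\eta\mapsto-\eta$. Path space notation: $\widehat\Omega=\{\pm1\}^{\mathbb{Z}^d\times\mathbb{Z}_+}$; $\mathcal P_\Pi$ is the law of $(\eta_t)_{t\ge0}$ with $\eta_0\sim\Pi$; $\mathfrak M_{t_0}^{t_1}$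 is the $\sigma$-algebra generated by $\eta_{t_0},\dots,\eta_{t_1}$, $\mathfrak M_t=\mathfrak M_t^t$. For a bounded measurable function $F$ on $\widehat\Omega$, $G^{(F)}(\eta):=\mathcal E[F\mid\mathfrak M_0]$ viewed as a function of $\eta_0=\eta\in\Omega$ (the expectation of $F$ for the chain started at $\eta$). $\zeta_t:=\eta_t(0)$, $\widehat\zeta=(\zeta_t)_{t\ge0}\in\Omega_+:=\{\pm1\}^{\mathbb{Z}_+}$; a function $f$ on $\Omega_+$ is identified with the function $f(\widehat\zeta)$ on $\widehat\Omega$. Walsh functions: $\Psi_\gamma(\widehat\zeta)=\prod_{t\in\gamma}\zeta_t$ for finite $\gamma\subset\mathbb{Z}_+$, $\Psi_\emptyset=1$. $\mu_*:=M\sqrt{\bar\mu(1+2\bar\mu)}$. *)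

theory Defs
  imports "HOL-Probability.Probability"
begin

text \<open>Sites of the lattice Z^d are vectors of type int^'d; a configuration
  (an element of Omega) is a function from sites to the spin values -1, +1 (as reals).\<close>

definition dotZ :: "real^'d \<Rightarrow> int^'d \<Rightarrow> real" where
  "dotZ lam u = (\<Sum>i\<in>UNIV. lam $ i * real_of_int (u $ i))"

definition ptilde :: "(int^'d \<Rightarrow> real) \<Rightarrow> real^'d \<Rightarrow> complex" where
  "ptilde P0 lam = (\<Sum>u\<in>{u. P0 u \<noteq> 0}. complex_of_real (P0 u) * cis (dotZ lam u))"

definition fourier_coeff :: "(real^'d \<Rightarrow> complex) \<Rightarrow> int^'d \<Rightarrow> complex" where
  "fourier_coeff h k = complex_of_real (1 / (2 * pi) ^ CARD('d)) *
     (LINT lam : cbox (- (\<chi> i. pi)) (\<chi> i. pi) | lborel. cis (- dotZ lam k) * h lam)"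

text \<open>Symmetric stochastic 2x2 matrix indexed by the spins -1, +1.\<close>
definition sym_stoch :: "(real \<Rightarrow> real \<Rightarrow> real) \<Rightarrow> bool" where
  "sym_stoch Q \<longleftrightarrow> (\<forall>s\<in>{-1,1}. \<forall>s'\<in>{-1,1}. 0 \<le> Q s s' \<and> Q s s' = Q s' s)
                    \<and> (\<forall>s\<in>{-1,1}. Q s 1 + Q s (-1) = 1)"

text \<open>Non-trivial eigenvalue of a symmetric stochastic 2x2 matrix (the other one is 1).\<close>
definition second_eig :: "(real \<Rightarrow> real \<Rightarrow> real) \<Rightarrow> real" where
  "second_eig Q = Q 1 1 - Q 1 (-1)"

definition spin_meas :: "(real \<Rightarrow> real \<Rightarrow> real) \<Rightarrow> real \<Rightarrow> real measure" where
  "spin_meas Q s = point_measure {-1, 1} (\<lambda>s'. ennreal (Q s s'))"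

definition Pi0 :: "(int^'d \<Rightarrow> real) measure" where
  "Pi0 = PiM UNIV (\<lambda>_. point_measure {-1, 1} (\<lambda>_. ennreal (1/2)))"

text \<open>Law of the next environment xi_{t+1} given xi_t = eta with the walker at 0.\<close>
definition xi_meas :: "(real \<Rightarrow> real \<Rightarrow> real) \<Rightarrow> (real \<Rightarrow> real \<Rightarrow> real)
    \<Rightarrow> (int^'d \<Rightarrow> real) \<Rightarrow> (int^'d \<Rightarrow> real) measure" where
  "xi_meas Q0 Q1 eta = PiM UNIV (\<lambda>y. spin_meas (if y = 0 then Q1 else Q0) (eta y))"

text \<open>Stochastic operator of the environment seen from the walk:
  (T f)(eta) = E[f(eta_{t+1}) | eta_t = eta], where the walker jumps by u with probability
  P0 u + eps c u eta(0), independently the environment is updated, and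
  eta_{t+1}(x) = xi_{t+1}(u + x).\<close>
definition Top :: "(int^'d \<Rightarrow> real) \<Rightarrow> (int^'d \<Rightarrow> real) \<Rightarrow> real
    \<Rightarrow> (real \<Rightarrow> real \<Rightarrow> real) \<Rightarrow> (real \<Rightarrow> real \<Rightarrow> real)
    \<Rightarrow> ((int^'d \<Rightarrow> real) \<Rightarrow> real) \<Rightarrow> (int^'d \<Rightarrow> real) \<Rightarrow> real" where
  "Top P0 c eps Q0 Q1 f eta =
     (\<Sum>u\<in>{u. P0 u \<noteq> 0 \<or> c u \<noteq> 0}. (P0 u + eps * c u * eta 0) *
        (\<integral>xi. f (\<lambda>x. xi (u + x)) \<partial>xi_meas Q0 Q1 eta))"

text \<open>Expectation E_eta[F(eta_0,...,eta_n)] of a function of the path (depending only on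
  the first n+1 coordinates) for the Markov chain with stochastic operator T started at eta.\<close>
primrec pathE :: "(('w \<Rightarrow> real) \<Rightarrow> 'w \<Rightarrow> real) \<Rightarrow> nat \<Rightarrow> ((nat \<Rightarrow> 'w) \<Rightarrow> real) \<Rightarrow> 'w \<Rightarrow> real" where
  "pathE T 0 F eta = F (\<lambda>_. eta)"
| "pathE T (Suc n) F eta = T (\<lambda>eta'. pathE T n (\<lambda>w. F (case_nat eta w)) eta') eta"

definition Phi :: "(int^'d) set \<Rightarrow> (int^'d \<Rightarrow> real) \<Rightarrow> real" where
  "Phi Gam eta = (\<Prod>x\<in>Gam. eta x)"

definition wcoeff :: "((int^'d \<Rightarrow> real) \<Rightarrow> real) \<Rightarrow> (int^'d) set \<Rightarrow> real" where
  "wcoeff f Gam = (\<integral>eta. f eta * Phi Gam eta \<partial>Pi0)"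

definition in_HM :: "real \<Rightarrow> ((int^'d \<Rightarrow> real) \<Rightarrow> real) \<Rightarrow> bool" where
  "in_HM M f \<longleftrightarrow> f \<in> borel_measurable Pi0 \<and> integrable Pi0 (\<lambda>eta. (f eta)\<^sup>2) \<and>
      (\<lambda>Gam. \<bar>wcoeff f Gam\<bar> * M ^ card Gam) summable_on {Gam. finite Gam}"

definition normM :: "real \<Rightarrow> ((int^'d \<Rightarrow> real) \<Rightarrow> real) \<Rightarrow> real" where
  "normM M f = (\<Sum>\<^sub>\<infinity>Gam\<in>{Gam. finite Gam}. \<bar>wcoeff f Gam\<bar> * M ^ card Gam)"

text \<open>G^{(f)} for f = sum over gamma subset {0..m-1} of fc gamma Psi_gamma, a function of
  zeta_t = eta_t(0), t < m.\<close>
definition Gf :: "(((int^'d \<Rightarrow> real) \<Rightarrow> real) \<Rightarrow> (int^'d \<Rightarrow> real) \<Rightarrow> real)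
    \<Rightarrow> nat \<Rightarrow> (nat set \<Rightarrow> real) \<Rightarrow> (int^'d \<Rightarrow> real) \<Rightarrow> real" where
  "Gf T m fc = pathE T (m - 1) (\<lambda>w. \<Sum>\<gamma>\<in>Pow {..<m}. fc \<gamma> * (\<Prod>t\<in>\<gamma>. w t 0))"

end

theory Submission
  imports Defs
begin

(* Writing f = \<Sum> f_\<gamma> \<Psi>_\<gamma>, one has G^(f) = \<Sum> f_\<gamma> G^(\<Psi>_\<gamma>), and G^(\<Psi>_\<gamma>) is built from the
   constant 1 by applying T once per time step and multiplying by the spin \<eta>(0) at the times in \<gamma>.
   On finite Walsh polynomials the M-norm is the weighted l1-norm of the coefficients, so multiplying
   by \<eta>(0) costs at most a factor M, while T contracts by mubar on functions of \<Pi>-mean zero.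
   Since the dynamics is symmetric under the spin flip (composed with x \<mapsto> -x), G^(\<Psi>_\<gamma>) is odd when
   |\<gamma>| is odd and then has mean zero.  An induction along the path bounds the norm of G^(\<Psi>_\<gamma>) for
   odd |\<gamma>|, and its mean and centred norm for even |\<gamma>|, each spin factor costing
   mu_star = M sqrt (mubar (1 + 2 mubar)); summing over \<gamma> \<subseteq> {0..m-1} gives (1 + mu_star)^m. *)

definition spin_configs :: "(int^'d \<Rightarrow> real) set" where
  "spin_configs = {eta. \<forall>x. eta x \<in> {-1, 1}}"

lemma space_Pi0: "space Pi0 = spin_configs"
  by (auto simp: Pi0_def space_PiM spin_configs_def space_point_measure PiE_def Pi_def extensional_def)

lemma space_xi_meas: "space (xi_meas Q0 Q1 eta) = spin_configs"
  by (auto simp: xi_meas_def spin_meas_def space_PiM spin_configs_def space_point_measure PiE_def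
      Pi_def extensional_def)

lemma shift_in_spin_configs: "xi \<in> spin_configs \<Longrightarrow> (\<lambda>x. xi (u + x)) \<in> spin_configs"
  by (auto simp: spin_configs_def)

lemma prob_space_uniform_spin: "prob_space (point_measure {-1, 1::real} (\<lambda>_. ennreal (1/2)))"
proof (rule prob_spaceI)
  have "ennreal (1/2) + ennreal (1/2) = 1"
    using ennreal_plus[of "1/2" "1/2"] by simp
  then show "emeasure (point_measure {-1, 1::real} (\<lambda>_. ennreal (1/2)))
      (space (point_measure {-1, 1::real} (\<lambda>_. ennreal (1/2)))) = 1"
    by (simp add: space_point_measure emeasure_point_measure_finite mult_2 del: ennreal_half)
qed

lemma product_prob_space_Pi0:
  "product_prob_space (\<lambda>_::int^'d. point_measure {-1, 1::real} (\<lambda>_. ennreal (1/2)))"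
  by (rule product_prob_spaceI) (rule prob_space_uniform_spin)

lemma prob_space_Pi0: "prob_space (Pi0 :: (int^'d \<Rightarrow> real) measure)"
proof -
  interpret product_prob_space "\<lambda>_::int^'d. point_measure {-1, 1::real} (\<lambda>_. ennreal (1/2))" UNIV
    by (rule product_prob_space_Pi0)
  show ?thesis unfolding Pi0_def by (rule P.prob_space_axioms)
qed

lemma integrable_Pi0_bounded:
  fixes f :: "(int^'d \<Rightarrow> real) \<Rightarrow> real"
  assumes "f \<in> borel_measurable Pi0" "\<forall>e\<in>spin_configs. \<bar>f e\<bar> \<le> K"
  shows "integrable Pi0 f"
proof -
  interpret prob_space Pi0 by (rule prob_space_Pi0)
  show ?thesis
    by (rule integrable_const_bound[where B=K]) (use assms in \<open>auto simp: space_Pi0 intro!: AE_I2\<close>)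
qed

lemma sym_stoch_entries:
  assumes "sym_stoch Q"
  shows "Q (-1) 1 = Q 1 (-1)" "Q 1 1 + Q 1 (-1) = 1" "Q (-1) 1 + Q (-1) (-1) = 1"
    "0 \<le> Q 1 1" "0 \<le> Q 1 (-1)" "0 \<le> Q (-1) 1" "0 \<le> Q (-1) (-1)"
proof -
  have "\<forall>s\<in>{-1,1}. \<forall>s'\<in>{-1,1}. 0 \<le> Q s s' \<and> Q s s' = Q s' s"
    and "\<forall>s\<in>{-1,1}. Q s 1 + Q s (-1) = 1"
    using assms unfolding sym_stoch_def by blast+
  then show "Q (-1) 1 = Q 1 (-1)" "Q 1 1 + Q 1 (-1) = 1" "Q (-1) 1 + Q (-1) (-1) = 1"
    "0 \<le> Q 1 1" "0 \<le> Q 1 (-1)" "0 \<le> Q (-1) 1" "0 \<le> Q (-1) (-1)"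
    by blast+
qed

lemma prob_space_spin_meas:
  assumes "sym_stoch Q" "s \<in> {-1, 1}"
  shows "prob_space (spin_meas Q s)"
proof -
  have "Q s 1 + Q s (-1) = 1" "Q s 1 \<ge> 0" "Q s (-1) \<ge> 0"
    using assms sym_stoch_entries[OF assms(1)] by auto
  then show ?thesis
    by (intro prob_spaceI)
       (simp add: spin_meas_def space_point_measure emeasure_point_measure_finite add.commute
         flip: ennreal_plus)
qed

lemma integral_spin_meas:
  assumes "sym_stoch Q" "s \<in> {-1, 1}"
  shows "(\<integral>z. z \<partial>spin_meas Q s) = second_eig Q * s"
proof -
  have "(\<integral>z. z \<partial>spin_meas Q s) = Q s 1 - Q s (-1)"
    unfolding spin_meas_def using assms sym_stoch_entries[OF assms(1)]
    by (subst lebesgue_integral_point_measure_finite) auto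
  also have "\<dots> = second_eig Q * s"
    using assms sym_stoch_entries[OF assms(1)] by (auto simp: second_eig_def)
  finally show ?thesis .
qed

lemma product_prob_space_xi_meas:
  assumes "sym_stoch Q0" "sym_stoch Q1" "eta \<in> spin_configs"
  shows "product_prob_space (\<lambda>y. spin_meas (if y = 0 then Q1 else Q0) (eta y))"
  by (rule product_prob_spaceI) (use assms in \<open>auto simp: spin_configs_def intro!: prob_space_spin_meas\<close>)

lemma prob_space_xi_meas:
  assumes "sym_stoch Q0" "sym_stoch Q1" "eta \<in> spin_configs"
  shows "prob_space (xi_meas Q0 Q1 eta)"
proof -
  interpret product_prob_space "\<lambda>y. spin_meas (if y = 0 then Q1 else Q0) (eta y)" UNIV
    by (rule product_prob_space_xi_meas[OF assms])
  show ?thesis unfolding xi_meas_def by (rule P.prob_space_axioms)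
qed

lemma (in product_prob_space) integral_prod_coordinates:
  fixes f :: "'i \<Rightarrow> 'a \<Rightarrow> real"
  assumes "finite J" "J \<subseteq> I" "\<And>j. j \<in> J \<Longrightarrow> integrable (M j) (f j)"
  shows "(\<integral>x. (\<Prod>j\<in>J. f j (x j)) \<partial>PiM I M) = (\<Prod>j\<in>J. integral\<^sup>L (M j) (f j))"
proof -
  have restrict: "(\<lambda>x. restrict x J) \<in> measurable (PiM I M) (PiM J M)"
    using assms(2) by (rule measurable_restrict_subset)
  have "(\<integral>x. (\<Prod>j\<in>J. f j (x j)) \<partial>PiM I M) = (\<integral>x. (\<Prod>j\<in>J. f j (restrict x J j)) \<partial>PiM I M)"
    by (intro Bochner_Integration.integral_cong refl prod.cong) auto
  also have "\<dots> = (\<integral>x. (\<Prod>j\<in>J. f j (x j)) \<partial>distr (PiM I M) (PiM J M) (\<lambda>x. restrict x J))"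
    by (rule integral_distr[symmetric, OF restrict]) (use assms(3) in measurable)
  also have "\<dots> = (\<Prod>j\<in>J. integral\<^sup>L (M j) (f j))"
    unfolding distr_PiM_restrict_finite[OF assms(1,2)]
    by (rule product_integral_prod) (use assms in auto)
  finally show ?thesis .
qed

definition site_eig :: "(real \<Rightarrow> real \<Rightarrow> real) \<Rightarrow> (real \<Rightarrow> real \<Rightarrow> real) \<Rightarrow> int^'d \<Rightarrow> real" where
  "site_eig Q0 Q1 y = second_eig (if y = 0 then Q1 else Q0)"

lemma site_eig_uminus: "site_eig Q0 Q1 (- y) = site_eig Q0 Q1 y"
  by (simp add: site_eig_def)

lemma integral_prod_xi_meas:
  assumes "sym_stoch Q0" "sym_stoch Q1" "eta \<in> spin_configs" "finite J"
  shows "(\<integral>xi. (\<Prod>y\<in>J. xi y) \<partial>xi_meas Q0 Q1 eta) = (\<Prod>y\<in>J. site_eig Q0 Q1 y * eta y)"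
proof -
  interpret product_prob_space "\<lambda>y. spin_meas (if y = 0 then Q1 else Q0) (eta y)" UNIV
    by (rule product_prob_space_xi_meas[OF assms(1-3)])
  have "(\<integral>xi. (\<Prod>y\<in>J. xi y) \<partial>xi_meas Q0 Q1 eta)
      = (\<Prod>y\<in>J. \<integral>z. z \<partial>spin_meas (if y = 0 then Q1 else Q0) (eta y))"
    unfolding xi_meas_def using assms(4)
    by (intro integral_prod_coordinates[of _ "\<lambda>_ z. z"])
       (auto simp: integrable_point_measure_finite spin_meas_def)
  also have "\<dots> = (\<Prod>y\<in>J. site_eig Q0 Q1 y * eta y)"
    using assms(1-3) by (intro prod.cong refl) (auto simp: site_eig_def spin_configs_def integral_spin_meas)
  finally show ?thesis .
qed

lemma measurable_coordinate_Pi0: "(\<lambda>e. e x) \<in> borel_measurable (Pi0::(int^'d \<Rightarrow> real) measure)"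
proof -
  have "(\<lambda>e. e x) \<in> measurable (Pi0::(int^'d \<Rightarrow> real) measure)
      (point_measure {-1, 1::real} (\<lambda>_. ennreal (1/2)))"
    unfolding Pi0_def by (rule measurable_component_singleton) simp
  then show ?thesis by (rule measurable_compose) simp
qed

lemma measurable_shift_xi_meas:
  fixes u :: "int^'d"
  shows "(\<lambda>xi x. xi (u + x)) \<in> measurable (xi_meas Q0 Q1 eta) Pi0"
  unfolding Pi0_def
proof (rule measurable_PiM_single')
  fix i :: "int^'d"
  have "sets (spin_meas (if u + i = 0 then Q1 else Q0) (eta (u + i)))
      = sets (point_measure {-1, 1::real} (\<lambda>_. ennreal (1/2)))"
    by (simp add: spin_meas_def sets_point_measure)
  moreover have "(\<lambda>xi. xi (u + i))
      \<in> measurable (xi_meas Q0 Q1 eta) (spin_meas (if u + i = 0 then Q1 else Q0) (eta (u + i)))"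
    unfolding xi_meas_def by (rule measurable_component_singleton) simp
  ultimately show "(\<lambda>xi. xi (u + i))
      \<in> measurable (xi_meas Q0 Q1 eta) (point_measure {-1, 1::real} (\<lambda>_. ennreal (1/2)))"
    using measurable_cong_sets by blast
qed (auto simp: space_xi_meas spin_configs_def space_point_measure PiE_iff)

lemma measurable_Phi [measurable]: "Phi G \<in> borel_measurable Pi0"
proof -
  have "(\<lambda>e. \<Prod>x\<in>G. e x) \<in> borel_measurable Pi0"
    by (rule borel_measurable_prod) (rule measurable_coordinate_Pi0)
  then show ?thesis by (simp add: Phi_def[abs_def])
qed

lemma Phi_in_signs:
  assumes "e \<in> spin_configs"
  shows "Phi G e \<in> {-1, 1}"
proof (cases "finite G")
  case True
  then show ?thesis unfolding Phi_def
  proof (induction G rule: finite_induct)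
    case (insert x F)
    then show ?case using assms by (auto simp: spin_configs_def)
  qed simp
qed (simp add: Phi_def)

lemma abs_Phi: "e \<in> spin_configs \<Longrightarrow> \<bar>Phi G e\<bar> = 1"
  using Phi_in_signs[of e G] by auto

lemma Phi_mult_Phi:
  assumes "e \<in> spin_configs" "finite G" "finite H"
  shows "Phi G e * Phi H e = Phi ((G - H) \<union> (H - G)) e"
proof -
  have split: "Phi (A \<union> B) e = Phi A e * Phi B e" if "finite A" "finite B" "A \<inter> B = {}" for A B
    using that unfolding Phi_def by (rule prod.union_disjoint)
  have parts: "(G - H) \<union> (G \<inter> H) = G" "(H - G) \<union> (G \<inter> H) = H" by blast+
  have disj: "(G - H) \<inter> (G \<inter> H) = {}" "(H - G) \<inter> (G \<inter> H) = {}" "(G - H) \<inter> (H - G) = {}"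
    by blast+
  have "Phi G e * Phi H e = Phi (G - H) e * Phi (H - G) e * (Phi (G \<inter> H) e)\<^sup>2"
    using assms(2,3) split[OF _ _ disj(1), unfolded parts(1)] split[OF _ _ disj(2), unfolded parts(2)]
    by (simp add: power2_eq_square algebra_simps)
  also have "(Phi (G \<inter> H) e)\<^sup>2 = 1"
    using Phi_in_signs[OF assms(1), of "G \<inter> H"] by auto
  also have "Phi (G - H) e * Phi (H - G) e = Phi ((G - H) \<union> (H - G)) e"
    using assms(2,3) by (intro split[symmetric] disj(3)) auto
  finally show ?thesis by simp
qed

lemma integral_Phi:
  assumes "finite G"
  shows "(\<integral>e. Phi G e \<partial>Pi0) = (if G = {} then 1 else 0)"
proof -
  interpret product_prob_space "\<lambda>_::int^'d. point_measure {-1, 1::real} (\<lambda>_. ennreal (1/2))" UNIV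
    by (rule product_prob_space_Pi0)
  have "(\<integral>e. Phi G e \<partial>Pi0) = (\<Prod>x\<in>G. \<integral>z. z \<partial>point_measure {-1, 1::real} (\<lambda>_. ennreal (1/2)))"
    unfolding Phi_def Pi0_def using assms
    by (intro integral_prod_coordinates[of _ "\<lambda>_ z. z"]) (auto intro!: integrable_point_measure_finite simp del: ennreal_half)
  also have "\<dots> = (\<Prod>x\<in>G. 0)"
    by (subst lebesgue_integral_point_measure_finite) auto
  finally show ?thesis
    using assms by (simp add: card_gt_0_iff)
qed

lemma integral_Phi_mult_Phi:
  assumes "finite G" "finite H"
  shows "(\<integral>e. Phi G e * Phi H e \<partial>Pi0) = (if G = H then 1 else 0)"
proof -
  have "(\<integral>e. Phi G e * Phi H e \<partial>Pi0) = (\<integral>e. Phi ((G - H) \<union> (H - G)) e \<partial>Pi0)"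
    by (rule Bochner_Integration.integral_cong) (auto simp: space_Pi0 Phi_mult_Phi assms)
  also have "\<dots> = (if G = H then 1 else 0)"
    using assms by (subst integral_Phi) auto
  finally show ?thesis .
qed

definition toggle :: "'a \<Rightarrow> 'a set \<Rightarrow> 'a set" where
  "toggle x G = (if x \<in> G then G - {x} else insert x G)"

lemma toggle_toggle [simp]: "toggle x (toggle x G) = G"
  by (auto simp: toggle_def)

lemma finite_toggle [simp]: "finite (toggle x G) \<longleftrightarrow> finite G"
  by (simp add: toggle_def)

lemma card_toggle_le: "finite G \<Longrightarrow> card (toggle x G) \<le> Suc (card G)"
  by (simp add: toggle_def card_insert_if diff_le_self le_SucI)

lemma Phi_toggle:
  assumes "e \<in> spin_configs" "finite G"
  shows "Phi (toggle x G) e = e x * Phi G e"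
proof (cases "x \<in> G")
  case True
  have "e x = -1 \<or> e x = 1" using assms(1) by (auto simp: spin_configs_def)
  then have "e x * e x = 1" by auto
  moreover have "Phi G e = e x * Phi (G - {x}) e"
    unfolding Phi_def using assms(2) True by (rule prod.remove)
  ultimately show ?thesis
    using True by (simp add: toggle_def mult.assoc[symmetric])
qed (use assms(2) in \<open>simp add: toggle_def Phi_def\<close>)

text \<open>The expansion is only required to hold on spin_configs, which carries Pi0 and every
  xi_meas.\<close>

definition walsh_expansion ::
    "(int^'d) set set \<Rightarrow> ((int^'d) set \<Rightarrow> real) \<Rightarrow> ((int^'d \<Rightarrow> real) \<Rightarrow> real) \<Rightarrow> bool" where
  "walsh_expansion F a g \<longleftrightarrow>
     finite F \<and> (\<forall>G\<in>F. finite G) \<and> (\<forall>e\<in>spin_configs. g e = (\<Sum>G\<in>F. a G * Phi G e))"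

definition walsh_poly :: "((int^'d \<Rightarrow> real) \<Rightarrow> real) \<Rightarrow> bool" where
  "walsh_poly g \<longleftrightarrow> (\<exists>F a. walsh_expansion F a g)"

lemma walsh_expansion_extend:
  assumes "walsh_expansion F a g" "finite K" "F \<subseteq> K" "\<forall>G\<in>K. finite G"
  shows "walsh_expansion K (\<lambda>G. if G \<in> F then a G else 0) g"
proof -
  have "(\<Sum>G\<in>K. (if G \<in> F then a G else 0) * Phi G e) = (\<Sum>G\<in>F. a G * Phi G e)" for e
    using assms(2,3) by (intro sum.mono_neutral_cong_right) auto
  then show ?thesis
    using assms unfolding walsh_expansion_def by simp
qed

lemma walsh_poly_cong: "walsh_poly g \<Longrightarrow> (\<forall>e\<in>spin_configs. h e = g e) \<Longrightarrow> walsh_poly h"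
  unfolding walsh_poly_def walsh_expansion_def by auto

lemma walsh_expansion_Phi: "finite G \<Longrightarrow> walsh_expansion {G} (\<lambda>_. 1) (Phi G)"
  unfolding walsh_expansion_def by auto

lemma walsh_poly_Phi: "finite G \<Longrightarrow> walsh_poly (Phi G)"
  unfolding walsh_poly_def using walsh_expansion_Phi by blast

lemma walsh_expansion_const: "walsh_expansion {{}} (\<lambda>_. k) (\<lambda>_. k)"
  unfolding walsh_expansion_def by (auto simp: Phi_def)

lemma walsh_poly_const: "walsh_poly (\<lambda>_. k)"
  unfolding walsh_poly_def using walsh_expansion_const by blast

lemma walsh_expansion_add:
  assumes "walsh_expansion F a f" "walsh_expansion F b g"
  shows "walsh_expansion F (\<lambda>G. a G + b G) (\<lambda>e. f e + g e)"
  using assms unfolding walsh_expansion_def by (simp add: sum.distrib algebra_simps)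

lemma walsh_expansion_common:
  assumes "walsh_expansion F a f" "walsh_expansion F' b g"
  obtains a' b' where "walsh_expansion (F \<union> F') a' f" "walsh_expansion (F \<union> F') b' g"
proof -
  have fin: "finite (F \<union> F')" "\<forall>G\<in>F \<union> F'. finite G"
    using assms unfolding walsh_expansion_def by auto
  show ?thesis
    by (rule that[OF walsh_expansion_extend[OF assms(1) fin(1) _ fin(2)]
          walsh_expansion_extend[OF assms(2) fin(1) _ fin(2)]]) auto
qed

lemma walsh_poly_add: "walsh_poly f \<Longrightarrow> walsh_poly g \<Longrightarrow> walsh_poly (\<lambda>e. f e + g e)"
  unfolding walsh_poly_def by (metis walsh_expansion_add walsh_expansion_common)

lemma walsh_expansion_cmult: "walsh_expansion F a g \<Longrightarrow> walsh_expansion F (\<lambda>G. k * a G) (\<lambda>e. k * g e)"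
  unfolding walsh_expansion_def by (simp add: sum_distrib_left algebra_simps)

lemma walsh_poly_cmult: "walsh_poly g \<Longrightarrow> walsh_poly (\<lambda>e. k * g e)"
  unfolding walsh_poly_def using walsh_expansion_cmult by blast

lemma walsh_poly_diff: "walsh_poly f \<Longrightarrow> walsh_poly g \<Longrightarrow> walsh_poly (\<lambda>e. f e - g e)"
  using walsh_poly_add[of f "\<lambda>e. (-1) * g e"] walsh_poly_cmult[of g "-1"] by simp

lemma walsh_poly_sum: "finite I \<Longrightarrow> (\<forall>i\<in>I. walsh_poly (h i)) \<Longrightarrow> walsh_poly (\<lambda>e. \<Sum>i\<in>I. h i e)"
proof (induction I rule: finite_induct)
  case empty
  then show ?case using walsh_poly_const[of 0] by simp
next
  case (insert x F)
  then show ?case using walsh_poly_add[of "h x" "\<lambda>e. \<Sum>i\<in>F. h i e"] by simp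
qed

lemma walsh_poly_prod_coordinates:
  assumes "finite G" "inj_on v G"
  shows "walsh_poly (\<lambda>e. \<Prod>x\<in>G. e (v x))"
proof (rule walsh_poly_cong)
  show "walsh_poly (Phi (v ` G))" using assms by (intro walsh_poly_Phi) simp
  show "\<forall>e\<in>spin_configs. (\<Prod>x\<in>G. e (v x)) = Phi (v ` G) e"
    using assms by (simp add: Phi_def prod.reindex)
qed

lemma walsh_expansion_mult_spin:
  assumes "walsh_expansion F a g"
  shows "walsh_expansion (toggle x ` F) (\<lambda>H. a (toggle x H)) (\<lambda>e. e x * g e)"
proof -
  have inj: "inj_on (toggle x) F" by (metis inj_on_inverseI toggle_toggle)
  have "e x * g e = (\<Sum>H\<in>toggle x ` F. a (toggle x H) * Phi H e)" if "e \<in> spin_configs" for e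
  proof -
    have "e x * g e = (\<Sum>G\<in>F. a G * (e x * Phi G e))"
      using assms that unfolding walsh_expansion_def by (simp add: sum_distrib_left algebra_simps)
    also have "\<dots> = (\<Sum>G\<in>F. a (toggle x (toggle x G)) * Phi (toggle x G) e)"
      using assms that unfolding walsh_expansion_def by (intro sum.cong refl) (simp add: Phi_toggle)
    finally show ?thesis by (simp add: sum.reindex[OF inj])
  qed
  then show ?thesis using assms unfolding walsh_expansion_def by auto
qed

lemma walsh_poly_mult_spin: "walsh_poly g \<Longrightarrow> walsh_poly (\<lambda>e. e x * g e)"
  unfolding walsh_poly_def using walsh_expansion_mult_spin by blast

lemma walsh_poly_spin_power: "walsh_poly (\<lambda>e. e x ^ k)"
  by (induction k) (simp_all add: walsh_poly_const walsh_poly_mult_spin)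

lemma walsh_poly_measurable:
  assumes "walsh_poly g"
  shows "g \<in> borel_measurable Pi0"
proof -
  obtain F a where F: "walsh_expansion F a g" using assms unfolding walsh_poly_def by blast
  have "(\<lambda>e. \<Sum>G\<in>F. a G * Phi G e) \<in> borel_measurable Pi0" by measurable
  then show ?thesis
    by (rule measurable_cong[THEN iffD1, rotated]) (use F in \<open>auto simp: walsh_expansion_def space_Pi0\<close>)
qed

lemma wcoeff_walsh_expansion:
  assumes F: "walsh_expansion F a g" and H: "finite H"
  shows "wcoeff g H = (if H \<in> F then a H else 0)"
proof -
  have fin: "finite F" "\<forall>G\<in>F. finite G" using F unfolding walsh_expansion_def by auto
  have "wcoeff g H = (\<integral>e. (\<Sum>G\<in>F. a G * (Phi G e * Phi H e)) \<partial>Pi0)"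
    unfolding wcoeff_def using F
    by (intro Bochner_Integration.integral_cong)
       (auto simp: walsh_expansion_def space_Pi0 sum_distrib_right mult.assoc)
  also have "\<dots> = (\<Sum>G\<in>F. a G * (\<integral>e. Phi G e * Phi H e \<partial>Pi0))"
  proof (subst Bochner_Integration.integral_sum)
    show "integrable Pi0 (\<lambda>e. a G * (Phi G e * Phi H e))" for G
      by (rule integrable_Pi0_bounded[where K="\<bar>a G\<bar>"]) (auto simp: abs_mult abs_Phi)
  qed simp
  also have "\<dots> = (\<Sum>G\<in>F. if G = H then a G else 0)"
    using fin H by (intro sum.cong refl) (simp add: integral_Phi_mult_Phi)
  also have "\<dots> = (if H \<in> F then a H else 0)"
    using fin by (simp add: sum.delta')
  finally show ?thesis .
qed

lemma normM_walsh_expansion: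
  assumes F: "walsh_expansion F a g"
  shows "normM M g = (\<Sum>G\<in>F. \<bar>a G\<bar> * M ^ card G)"
proof -
  have fin: "finite F" "\<forall>G\<in>F. finite G" using F unfolding walsh_expansion_def by auto
  have "normM M g = (\<Sum>\<^sub>\<infinity>G\<in>F. \<bar>wcoeff g G\<bar> * M ^ card G)"
    unfolding normM_def by (rule infsum_cong_neutral) (use fin in \<open>auto simp: wcoeff_walsh_expansion[OF F]\<close>)
  also have "\<dots> = (\<Sum>G\<in>F. \<bar>a G\<bar> * M ^ card G)"
    using fin by (simp add: infsum_finite wcoeff_walsh_expansion[OF F])
  finally show ?thesis .
qed

lemma normM_Phi: "finite G \<Longrightarrow> normM M (Phi G) = M ^ card G"
  by (simp add: normM_walsh_expansion[OF walsh_expansion_Phi])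

lemma abs_le_normM:
  assumes "walsh_poly g" "M \<ge> 1" "e \<in> spin_configs"
  shows "\<bar>g e\<bar> \<le> normM M g"
proof -
  obtain F a where F: "walsh_expansion F a g" using assms unfolding walsh_poly_def by blast
  have "\<bar>g e\<bar> = \<bar>\<Sum>G\<in>F. a G * Phi G e\<bar>" using F assms(3) unfolding walsh_expansion_def by simp
  also have "\<dots> \<le> (\<Sum>G\<in>F. \<bar>a G\<bar> * \<bar>Phi G e\<bar>)" by (simp add: sum_abs[THEN order_trans] abs_mult)
  also have "\<dots> \<le> (\<Sum>G\<in>F. \<bar>a G\<bar> * M ^ card G)"
    using assms(2,3) by (intro sum_mono mult_left_mono) (simp_all add: abs_Phi)
  finally show ?thesis by (simp add: normM_walsh_expansion[OF F])
qed

lemma in_HM_walsh_poly: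
  assumes "walsh_poly g"
  shows "in_HM M g"
proof -
  obtain F a where F: "walsh_expansion F a g" using assms unfolding walsh_poly_def by blast
  have meas: "g \<in> borel_measurable Pi0" by (rule walsh_poly_measurable[OF assms])
  have "\<bar>(g e)\<^sup>2\<bar> \<le> (normM 1 g)\<^sup>2" if "e \<in> spin_configs" for e
    using power_mono[OF abs_le_normM[OF assms order_refl that] abs_ge_zero, of 2] by (simp add: power_abs)
  then have "integrable Pi0 (\<lambda>e. (g e)\<^sup>2)"
    using meas by (intro integrable_Pi0_bounded[where K="(normM 1 g)\<^sup>2"]) auto
  moreover have "(\<lambda>G. \<bar>wcoeff g G\<bar> * M ^ card G) summable_on {G. finite G}"
    by (rule finite_nonzero_values_imp_summable_on, rule finite_subset[of _ F])
       (use F in \<open>auto simp: wcoeff_walsh_expansion[OF F] walsh_expansion_def split: if_splits\<close>)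
  ultimately show ?thesis using meas unfolding in_HM_def by blast
qed

lemma normM_cong: "\<forall>e\<in>spin_configs. f e = g e \<Longrightarrow> normM M f = normM M g"
  unfolding normM_def wcoeff_def
  by (intro infsum_cong arg_cong2[where f="(*)"] arg_cong[where f=abs] Bochner_Integration.integral_cong)
     (auto simp: space_Pi0)

lemma normM_nonneg: "M \<ge> 0 \<Longrightarrow> normM M g \<ge> 0"
  unfolding normM_def by (intro infsum_nonneg) simp

lemma normM_const: "normM M (\<lambda>_. k) = \<bar>k\<bar>"
  by (simp add: normM_walsh_expansion[OF walsh_expansion_const])

lemma normM_cmult:
  assumes "walsh_poly g"
  shows "normM M (\<lambda>e. k * g e) = \<bar>k\<bar> * normM M g"
proof -
  obtain F a where F: "walsh_expansion F a g" using assms unfolding walsh_poly_def by blast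
  show ?thesis
    by (simp add: normM_walsh_expansion[OF F] normM_walsh_expansion[OF walsh_expansion_cmult[OF F]]
        sum_distrib_left abs_mult mult.assoc)
qed

lemma normM_add_le:
  assumes "walsh_poly f" "walsh_poly g" "M \<ge> 0"
  shows "normM M (\<lambda>e. f e + g e) \<le> normM M f + normM M g"
proof -
  obtain F a b where a: "walsh_expansion F a f" and b: "walsh_expansion F b g"
    using assms(1,2) walsh_expansion_common unfolding walsh_poly_def by metis
  have "(\<Sum>G\<in>F. \<bar>a G + b G\<bar> * M ^ card G) \<le> (\<Sum>G\<in>F. \<bar>a G\<bar> * M ^ card G + \<bar>b G\<bar> * M ^ card G)"
    using assms(3) by (intro sum_mono) (simp add: distrib_right[symmetric] mult_right_mono abs_triangle_ineq)
  then show ?thesis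
    by (simp add: normM_walsh_expansion[OF walsh_expansion_add[OF a b]] normM_walsh_expansion[OF a]
        normM_walsh_expansion[OF b] sum.distrib)
qed

lemma normM_diff_le:
  assumes "walsh_poly f" "walsh_poly g" "M \<ge> 0"
  shows "normM M (\<lambda>e. f e - g e) \<le> normM M f + normM M g"
  using normM_add_le[OF assms(1) walsh_poly_cmult[OF assms(2)] assms(3), of "-1"]
    normM_cmult[OF assms(2), of M "-1"] by simp

lemma normM_sum_le:
  assumes "finite I" "\<forall>i\<in>I. walsh_poly (h i)" "M \<ge> 0"
  shows "normM M (\<lambda>e. \<Sum>i\<in>I. h i e) \<le> (\<Sum>i\<in>I. normM M (h i))"
  using assms(1,2)
proof (induction I rule: finite_induct)
  case empty
  then show ?case by (simp add: normM_const)
next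
  case (insert x F)
  then have "normM M (\<lambda>e. h x e + (\<Sum>i\<in>F. h i e)) \<le> normM M (h x) + normM M (\<lambda>e. \<Sum>i\<in>F. h i e)"
    using assms(3) by (intro normM_add_le walsh_poly_sum) auto
  with insert show ?case by simp
qed

lemma normM_mult_spin_le:
  assumes "walsh_poly g" "M \<ge> 1"
  shows "normM M (\<lambda>e. e x * g e) \<le> M * normM M g"
proof -
  obtain F a where F: "walsh_expansion F a g" using assms unfolding walsh_poly_def by blast
  have inj: "inj_on (toggle x) F" by (metis inj_on_inverseI toggle_toggle)
  have "normM M (\<lambda>e. e x * g e) = (\<Sum>G\<in>F. \<bar>a G\<bar> * M ^ card (toggle x G))"
    by (simp add: normM_walsh_expansion[OF walsh_expansion_mult_spin[OF F]] sum.reindex[OF inj])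
  also have "\<dots> \<le> (\<Sum>G\<in>F. \<bar>a G\<bar> * M ^ Suc (card G))"
    using F assms(2) unfolding walsh_expansion_def
    by (intro sum_mono mult_left_mono power_increasing card_toggle_le) auto
  also have "\<dots> = M * normM M g"
    by (simp add: normM_walsh_expansion[OF F] sum_distrib_left algebra_simps)
  finally show ?thesis .
qed

locale env_walk =
  fixes P0 c :: "int^'d \<Rightarrow> real" and eps :: real and Q0 Q1 :: "real \<Rightarrow> real \<Rightarrow> real"
  assumes P0_fin: "finite {u. P0 u \<noteq> 0}"
    and P0_sum: "(\<Sum>u\<in>{u. P0 u \<noteq> 0}. P0 u) = 1"
    and P0_even: "\<forall>u. P0 (- u) = P0 u"
    and c_odd: "\<forall>u. c (- u) = - c u"
    and c_fin: "finite {u. c u \<noteq> 0}"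
    and Q0: "sym_stoch Q0" and Q1: "sym_stoch Q1"
begin

abbreviation T :: "((int^'d \<Rightarrow> real) \<Rightarrow> real) \<Rightarrow> (int^'d \<Rightarrow> real) \<Rightarrow> real" where
  "T \<equiv> Top P0 c eps Q0 Q1"

definition jumps :: "(int^'d) set" where
  "jumps = {u. P0 u \<noteq> 0 \<or> c u \<noteq> 0}"

lemma finite_jumps: "finite jumps"
proof -
  have "jumps = {u. P0 u \<noteq> 0} \<union> {u. c u \<noteq> 0}" by (auto simp: jumps_def)
  then show ?thesis using P0_fin c_fin by simp
qed

lemma uminus_in_jumps_iff: "- u \<in> jumps \<longleftrightarrow> u \<in> jumps"
  using P0_even c_odd by (auto simp: jumps_def)

lemma T_eq: "T f eta = (\<Sum>u\<in>jumps. (P0 u + eps * c u * eta 0) *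
    (\<integral>xi. f (\<lambda>x. xi (u + x)) \<partial>xi_meas Q0 Q1 eta))"
  unfolding Top_def jumps_def ..

lemma T_cong:
  assumes "\<forall>e\<in>spin_configs. f e = g e"
  shows "T f eta = T g eta"
  unfolding T_eq
  by (intro sum.cong refl arg_cong2[where f="(*)"] Bochner_Integration.integral_cong)
     (use assms in \<open>auto simp: space_xi_meas shift_in_spin_configs\<close>)

lemma T_cmult: "T (\<lambda>e. k * f e) eta = k * T f eta"
  unfolding T_eq by (simp add: sum_distrib_left algebra_simps)

lemma integrable_xi_meas_shift:
  assumes "walsh_poly f" "eta \<in> spin_configs"
  shows "integrable (xi_meas Q0 Q1 eta) (\<lambda>xi. f (\<lambda>x. xi (u + x)))"
proof -
  interpret prob_space "xi_meas Q0 Q1 eta" by (rule prob_space_xi_meas[OF Q0 Q1 assms(2)])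
  show ?thesis
  proof (rule integrable_const_bound[where B="normM 1 f"])
    show "AE xi in xi_meas Q0 Q1 eta. norm (f (\<lambda>x. xi (u + x))) \<le> normM 1 f"
      by (intro AE_I2) (auto simp: space_xi_meas shift_in_spin_configs intro: abs_le_normM[OF assms(1)])
    show "(\<lambda>xi. f (\<lambda>x. xi (u + x))) \<in> borel_measurable (xi_meas Q0 Q1 eta)"
      by (rule measurable_compose[OF measurable_shift_xi_meas walsh_poly_measurable[OF assms(1)]])
  qed
qed

lemma T_sum:
  assumes "finite I" "\<forall>i\<in>I. walsh_poly (h i)" "eta \<in> spin_configs"
  shows "T (\<lambda>e. \<Sum>i\<in>I. h i e) eta = (\<Sum>i\<in>I. T (h i) eta)"
proof -
  have "(\<integral>xi. (\<Sum>i\<in>I. h i (\<lambda>x. xi (u + x))) \<partial>xi_meas Q0 Q1 eta)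
      = (\<Sum>i\<in>I. \<integral>xi. h i (\<lambda>x. xi (u + x)) \<partial>xi_meas Q0 Q1 eta)" for u
    using assms by (intro Bochner_Integration.integral_sum integrable_xi_meas_shift) auto
  then show ?thesis
    unfolding T_eq by (simp add: sum_distrib_left sum.swap[of _ jumps])
qed

lemma T_add:
  assumes "walsh_poly f" "walsh_poly g" "eta \<in> spin_configs"
  shows "T (\<lambda>e. f e + g e) eta = T f eta + T g eta"
  using T_sum[of "UNIV::bool set" "\<lambda>b. if b then f else g" eta] assms by (simp add: UNIV_bool ac_simps)

lemma T_linear:
  assumes "finite I" "\<forall>i\<in>I. walsh_poly (h i)" "eta \<in> spin_configs"
  shows "T (\<lambda>e. \<Sum>i\<in>I. a i * h i e) eta = (\<Sum>i\<in>I. a i * T (h i) eta)"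
  using assms T_sum[of I "\<lambda>i e. a i * h i e"] by (simp add: walsh_poly_cmult T_cmult)

lemma T_prod_coordinates:
  assumes "eta \<in> spin_configs" "finite G" "inj_on v G"
  shows "T (\<lambda>e. \<Prod>x\<in>G. e (v x)) eta =
    (\<Sum>u\<in>jumps. (P0 u + eps * c u * eta 0) * (\<Prod>x\<in>G. site_eig Q0 Q1 (u + v x) * eta (u + v x)))"
  unfolding T_eq
proof (intro sum.cong refl arg_cong2[where f="(*)"])
  fix u
  have inj: "inj_on (\<lambda>x. u + v x) G" using assms(3) by (auto simp: inj_on_def)
  have "(\<integral>xi. (\<Prod>x\<in>G. xi (u + v x)) \<partial>xi_meas Q0 Q1 eta)
      = (\<integral>xi. (\<Prod>y\<in>(\<lambda>x. u + v x) ` G. xi y) \<partial>xi_meas Q0 Q1 eta)"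
    by (simp add: prod.reindex[OF inj])
  also have "\<dots> = (\<Prod>y\<in>(\<lambda>x. u + v x) ` G. site_eig Q0 Q1 y * eta y)"
    using assms(2) by (intro integral_prod_xi_meas[OF Q0 Q1 assms(1)]) simp
  finally show "(\<integral>xi. (\<Prod>x\<in>G. xi (u + v x)) \<partial>xi_meas Q0 Q1 eta)
      = (\<Prod>x\<in>G. site_eig Q0 Q1 (u + v x) * eta (u + v x))"
    by (simp add: prod.reindex[OF inj])
qed

lemma T_Phi:
  assumes "eta \<in> spin_configs" "finite G"
  shows "T (Phi G) eta =
    (\<Sum>u\<in>jumps. (P0 u + eps * c u * eta 0) * (\<Prod>x\<in>G. site_eig Q0 Q1 (u + x) * eta (u + x)))"
  using T_prod_coordinates[OF assms, of "\<lambda>x. x"] by (simp add: Phi_def[abs_def])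

lemma walsh_poly_T_Phi:
  assumes "finite G"
  shows "walsh_poly (T (Phi G))"
proof (rule walsh_poly_cong)
  let ?W = "\<lambda>u e. \<Prod>x\<in>G. e (u + x)"
  let ?L = "\<lambda>u. \<Prod>x\<in>G. site_eig Q0 Q1 (u + x)"
  have "walsh_poly (?W u)" for u
    using assms by (intro walsh_poly_prod_coordinates) (auto simp: inj_on_def)
  then show "walsh_poly (\<lambda>e. \<Sum>u\<in>jumps. (P0 u * ?L u) * ?W u e + (eps * c u * ?L u) * (e 0 * ?W u e))"
    by (intro walsh_poly_sum ballI walsh_poly_add walsh_poly_cmult walsh_poly_mult_spin finite_jumps)
  show "\<forall>e\<in>spin_configs. T (Phi G) e
      = (\<Sum>u\<in>jumps. (P0 u * ?L u) * ?W u e + (eps * c u * ?L u) * (e 0 * ?W u e))"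
    using assms by (simp add: T_Phi prod.distrib algebra_simps)
qed

lemma T_walsh_expansion:
  assumes "walsh_expansion F a g" "eta \<in> spin_configs"
  shows "T g eta = (\<Sum>G\<in>F. a G * T (Phi G) eta)"
proof -
  have "T g eta = T (\<lambda>e. \<Sum>G\<in>F. a G * Phi G e) eta"
    using assms(1) unfolding walsh_expansion_def by (intro T_cong) auto
  also have "\<dots> = (\<Sum>G\<in>F. a G * T (Phi G) eta)"
    using assms unfolding walsh_expansion_def by (intro T_linear) (auto intro: walsh_poly_Phi)
  finally show ?thesis .
qed

lemma walsh_poly_T:
  assumes "walsh_poly g"
  shows "walsh_poly (T g)"
proof -
  obtain F a where F: "walsh_expansion F a g" using assms unfolding walsh_poly_def by blast
  have "walsh_poly (\<lambda>e. \<Sum>G\<in>F. a G * T (Phi G) e)"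
    using F unfolding walsh_expansion_def by (intro walsh_poly_sum ballI walsh_poly_cmult walsh_poly_T_Phi) auto
  then show ?thesis
    by (rule walsh_poly_cong) (use T_walsh_expansion[OF F] in blast)
qed

lemma T_const:
  assumes "eta \<in> spin_configs"
  shows "T (\<lambda>_. k) eta = k"
proof -
  have "(\<Sum>u\<in>jumps. P0 u) = (\<Sum>u\<in>{u. P0 u \<noteq> 0}. P0 u)"
    by (rule sum.mono_neutral_right[OF finite_jumps]) (auto simp: jumps_def)
  then have P0: "(\<Sum>u\<in>jumps. P0 u) = 1" using P0_sum by simp
  have "(\<Sum>u\<in>jumps. c u) = (\<Sum>u\<in>jumps. c (- u))"
    by (rule sum.reindex_bij_witness[of _ uminus uminus]) (auto simp: uminus_in_jumps_iff)
  then have c: "(\<Sum>u\<in>jumps. c u) = 0" using c_odd by (simp add: sum_negf)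
  have "T (\<lambda>_. 1) eta = T (Phi {}) eta" by (simp add: Phi_def[abs_def])
  also have "\<dots> = (\<Sum>u\<in>jumps. P0 u) + eps * eta 0 * (\<Sum>u\<in>jumps. c u)"
    using assms by (simp add: T_Phi sum.distrib sum_distrib_left algebra_simps)
  finally show ?thesis
    using T_cmult[of k "\<lambda>_. 1" eta] by (simp add: P0 c)
qed

lemma T_diff_const:
  assumes "walsh_poly g" "e \<in> spin_configs"
  shows "T (\<lambda>e. g e - k) e = T g e - k"
  using T_add[OF assms(1) walsh_poly_const assms(2), of "- k"] T_const[OF assms(2)] by simp

end

text \<open>The global spin flip composed with the reflection x \<mapsto> -x.  As c is odd, this (and not
  the flip alone, since the spin at the walker biases the jump) is a symmetry of the dynamics.\<close>

definition flip_refl :: "(int^'d \<Rightarrow> real) \<Rightarrow> (int^'d \<Rightarrow> real)" where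
  "flip_refl e = (\<lambda>x. - e (- x))"

lemma flip_refl_in_spin_configs: "e \<in> spin_configs \<Longrightarrow> flip_refl e \<in> spin_configs"
  by (auto simp: spin_configs_def flip_refl_def)

lemma Phi_flip_refl: "finite G \<Longrightarrow> Phi G (flip_refl e) = (-1) ^ card G * (\<Prod>x\<in>G. e (- x))"
  by (simp add: Phi_def flip_refl_def prod_uminus)

lemma walsh_poly_flip_refl:
  assumes "walsh_poly g"
  shows "walsh_poly (\<lambda>e. g (flip_refl e))"
proof -
  obtain F a where F: "walsh_expansion F a g" using assms unfolding walsh_poly_def by blast
  have "walsh_poly (\<lambda>e. \<Sum>G\<in>F. (a G * (-1) ^ card G) * (\<Prod>x\<in>G. e (- x)))"
    using F unfolding walsh_expansion_def
    by (intro walsh_poly_sum ballI walsh_poly_cmult walsh_poly_prod_coordinates) (auto simp: inj_on_def)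
  then show ?thesis
    by (rule walsh_poly_cong)
       (use F in \<open>auto simp: walsh_expansion_def flip_refl_in_spin_configs Phi_flip_refl intro!: sum.cong\<close>)
qed

definition flip_parity :: "((int^'d \<Rightarrow> real) \<Rightarrow> real) \<Rightarrow> real \<Rightarrow> bool" where
  "flip_parity g s \<longleftrightarrow> (\<forall>e\<in>spin_configs. g (flip_refl e) = s * g e)"

lemma flip_parity_mult_spin0: "flip_parity g s \<Longrightarrow> flip_parity (\<lambda>e. e 0 * g e) (- s)"
  unfolding flip_parity_def by (auto simp: flip_refl_def)

context env_walk
begin

lemma T_Phi_flip_refl:
  assumes "eta \<in> spin_configs" "finite G"
  shows "T (Phi G) (flip_refl eta) = (-1) ^ card G * T (\<lambda>e. \<Prod>x\<in>G. e (- x)) eta"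
proof -
  have "T (Phi G) (flip_refl eta) = (\<Sum>u\<in>jumps. (P0 u - eps * c u * eta 0) *
      (\<Prod>x\<in>G. site_eig Q0 Q1 (u + x) * - eta (- (u + x))))"
    using T_Phi[OF flip_refl_in_spin_configs[OF assms(1)] assms(2)] by (simp add: flip_refl_def)
  also have "\<dots> = (\<Sum>u\<in>jumps. (P0 (- u) - eps * c (- u) * eta 0) *
      (\<Prod>x\<in>G. site_eig Q0 Q1 (- u + x) * - eta (- (- u + x))))"
    by (rule sum.reindex_bij_witness[of _ uminus uminus]) (auto simp: uminus_in_jumps_iff)
  also have "\<dots> = (\<Sum>u\<in>jumps. (P0 u + eps * c u * eta 0) *
      ((-1) ^ card G * (\<Prod>x\<in>G. site_eig Q0 Q1 (u + - x) * eta (u + - x))))"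
  proof (intro sum.cong refl)
    fix u :: "int^'d"
    have "site_eig Q0 Q1 (- u + x) = site_eig Q0 Q1 (u + - x)" for x
      using site_eig_uminus[of Q0 Q1 "u + - x"] by (simp add: algebra_simps)
    then have "(\<Prod>x\<in>G. site_eig Q0 Q1 (- u + x) * - eta (- (- u + x)))
        = (\<Prod>x\<in>G. - (site_eig Q0 Q1 (u + - x) * eta (u + - x)))"
      by (intro prod.cong refl) (simp add: algebra_simps)
    also have "\<dots> = (-1) ^ card G * (\<Prod>x\<in>G. site_eig Q0 Q1 (u + - x) * eta (u + - x))"
      by (rule prod_uminus)
    finally show "(P0 (- u) - eps * c (- u) * eta 0) * (\<Prod>x\<in>G. site_eig Q0 Q1 (- u + x) * - eta (- (- u + x)))
        = (P0 u + eps * c u * eta 0) * ((-1) ^ card G * (\<Prod>x\<in>G. site_eig Q0 Q1 (u + - x) * eta (u + - x)))"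
      using P0_even c_odd by simp
  qed
  also have "\<dots> = (-1) ^ card G * T (\<lambda>e. \<Prod>x\<in>G. e (- x)) eta"
    using T_prod_coordinates[OF assms, of uminus] by (simp add: sum_distrib_left algebra_simps)
  finally show ?thesis .
qed

lemma T_flip_refl:
  assumes "walsh_poly g" "eta \<in> spin_configs"
  shows "T g (flip_refl eta) = T (\<lambda>e. g (flip_refl e)) eta"
proof -
  obtain F a where F: "walsh_expansion F a g" using assms unfolding walsh_poly_def by blast
  have fin: "finite F" "\<forall>G\<in>F. finite G" using F unfolding walsh_expansion_def by auto
  have "T g (flip_refl eta) = (\<Sum>G\<in>F. a G * T (Phi G) (flip_refl eta))"
    by (rule T_walsh_expansion[OF F flip_refl_in_spin_configs[OF assms(2)]])
  also have "\<dots> = (\<Sum>G\<in>F. (a G * (-1) ^ card G) * T (\<lambda>e. \<Prod>x\<in>G. e (- x)) eta)"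
    using fin assms(2) by (intro sum.cong refl) (simp add: T_Phi_flip_refl)
  also have "\<dots> = T (\<lambda>e. \<Sum>G\<in>F. (a G * (-1) ^ card G) * (\<Prod>x\<in>G. e (- x))) eta"
    using fin assms(2)
    by (intro T_linear[symmetric]) (auto intro!: walsh_poly_prod_coordinates simp: inj_on_def)
  also have "\<dots> = T (\<lambda>e. g (flip_refl e)) eta"
    using F unfolding walsh_expansion_def
    by (intro T_cong) (auto simp: flip_refl_in_spin_configs Phi_flip_refl intro!: sum.cong)
  finally show ?thesis .
qed

lemma flip_parity_T:
  assumes "walsh_poly g" "flip_parity g s"
  shows "flip_parity (T g) s"
  unfolding flip_parity_def
proof
  fix e :: "int^'d \<Rightarrow> real"
  assume e: "e \<in> spin_configs"
  have "T g (flip_refl e) = T (\<lambda>e'. g (flip_refl e')) e" by (rule T_flip_refl[OF assms(1) e])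
  also have "\<dots> = T (\<lambda>e'. s * g e') e" by (rule T_cong) (use assms(2) in \<open>simp add: flip_parity_def\<close>)
  finally show "T g (flip_refl e) = s * T g e" by (simp add: T_cmult)
qed

end

locale env_walk_stationary = env_walk P0 c eps Q0 Q1
  for P0 c :: "int^'d \<Rightarrow> real" and eps :: real and Q0 Q1 :: "real \<Rightarrow> real \<Rightarrow> real" +
  fixes rho :: "(int^'d \<Rightarrow> real) \<Rightarrow> real" and B M mubar :: real
  assumes rho_meas: "rho \<in> borel_measurable Pi0"
    and rho_bdd: "\<forall>eta. 0 \<le> rho eta \<and> rho eta \<le> B"
    and rho_prob: "(\<integral>eta. rho eta \<partial>Pi0) = 1"
    and rho_inv: "\<forall>A\<in>sets Pi0. (\<integral>eta. T (indicator A) eta * rho eta \<partial>Pi0)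
                                  = (\<integral>eta. indicator A eta * rho eta \<partial>Pi0)"
    and M: "M > 1"
    and mubar: "0 < mubar" "mubar < 1"
    and contr: "\<forall>f. in_HM M f \<and> (\<integral>eta. f eta * rho eta \<partial>Pi0) = 0
                      \<longrightarrow> normM M (T f) \<le> mubar * normM M f"
begin

definition mean :: "((int^'d \<Rightarrow> real) \<Rightarrow> real) \<Rightarrow> real" where
  "mean g = (\<integral>e. g e * rho e \<partial>Pi0)"

lemma integrable_mult_rho:
  assumes "walsh_poly g"
  shows "integrable Pi0 (\<lambda>e. g e * rho e)"
proof (rule integrable_Pi0_bounded[where K="normM 1 g * B"])
  show "(\<lambda>e. g e * rho e) \<in> borel_measurable Pi0"
    using walsh_poly_measurable[OF assms] rho_meas by measurable
  show "\<forall>e\<in>spin_configs. \<bar>g e * rho e\<bar> \<le> normM 1 g * B"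
    using abs_le_normM[OF assms order_refl] normM_nonneg[of 1 g] rho_bdd by (auto simp: abs_mult intro!: mult_mono)
qed

lemma mean_cong: "\<forall>e\<in>spin_configs. f e = g e \<Longrightarrow> mean f = mean g"
  unfolding mean_def by (rule Bochner_Integration.integral_cong) (auto simp: space_Pi0)

lemma mean_add: "walsh_poly f \<Longrightarrow> walsh_poly g \<Longrightarrow> mean (\<lambda>e. f e + g e) = mean f + mean g"
  unfolding mean_def by (simp add: distrib_right integrable_mult_rho)

lemma mean_cmult: "mean (\<lambda>e. k * g e) = k * mean g"
  unfolding mean_def by (simp add: mult.assoc)

lemma mean_const: "mean (\<lambda>_. k) = k"
  unfolding mean_def using rho_prob by simp

lemma mean_sum:
  assumes "finite I" "\<forall>i\<in>I. walsh_poly (h i)"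
  shows "mean (\<lambda>e. \<Sum>i\<in>I. h i e) = (\<Sum>i\<in>I. mean (h i))"
  unfolding mean_def using assms by (simp add: sum_distrib_right integrable_mult_rho)

lemma mean_centred: "walsh_poly g \<Longrightarrow> mean (\<lambda>e. g e - mean g) = 0"
  using mean_add[of g "\<lambda>_. - mean g"] by (simp add: walsh_poly_const mean_const)

lemma abs_mean_le:
  assumes "walsh_poly g" "\<forall>e\<in>spin_configs. \<bar>g e\<bar> \<le> K"
  shows "\<bar>mean g\<bar> \<le> K"
proof -
  have "\<bar>mean g\<bar> \<le> (\<integral>e. \<bar>g e * rho e\<bar> \<partial>Pi0)"
    unfolding mean_def by (rule integral_abs_bound)
  also have "\<dots> \<le> (\<integral>e. K * rho e \<partial>Pi0)"
  proof (rule integral_mono)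
    show "integrable Pi0 (\<lambda>e. \<bar>g e * rho e\<bar>)" using integrable_mult_rho[OF assms(1)] by simp
    show "integrable Pi0 (\<lambda>e. K * rho e)"
      using rho_meas rho_bdd by (intro integrable_mult_right integrable_Pi0_bounded[where K=B]) auto
    show "\<bar>g e * rho e\<bar> \<le> K * rho e" if "e \<in> space Pi0" for e
      using that assms(2) rho_bdd by (auto simp: space_Pi0 abs_mult intro!: mult_right_mono)
  qed
  also have "\<dots> = K" using rho_prob by simp
  finally show ?thesis .
qed

lemma abs_mean_le_normM: "walsh_poly g \<Longrightarrow> \<bar>mean g\<bar> \<le> normM M g"
  using M by (intro abs_mean_le ballI abs_le_normM) auto

lemma normM_T_le_contraction: "walsh_poly g \<Longrightarrow> mean g = 0 \<Longrightarrow> normM M (T g) \<le> mubar * normM M g"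
  using contr in_HM_walsh_poly unfolding mean_def by blast

text \<open>Stationarity is only assumed for indicators; for Phi G it is applied to the indicator
  of the event Phi G = 1, which equals (1 + Phi G) / 2 on the spin configurations.\<close>

lemma mean_T_Phi:
  assumes "finite G"
  shows "mean (T (Phi G)) = mean (Phi G)"
proof -
  define A where "A = Phi G -` {1} \<inter> space Pi0"
  have A: "A \<in> sets Pi0" unfolding A_def by (rule measurable_sets[OF measurable_Phi]) simp
  have ind: "indicator A e = 1/2 + 1/2 * Phi G e" if "e \<in> spin_configs" for e
    using that Phi_in_signs[OF that, of G] by (auto simp: A_def space_Pi0 indicator_def)
  have wP: "walsh_poly (\<lambda>e. 1/2 * Phi G e)" "walsh_poly (\<lambda>e. 1/2 * T (Phi G) e)"
    using walsh_poly_cmult[OF walsh_poly_Phi[OF assms]] walsh_poly_cmult[OF walsh_poly_T_Phi[OF assms]]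
    by blast+
  have T_ind: "T (indicator A) e = 1/2 + 1/2 * T (Phi G) e" if "e \<in> spin_configs" for e
  proof -
    have "T (indicator A) e = T (\<lambda>e. 1/2 + 1/2 * Phi G e) e" by (rule T_cong) (simp add: ind)
    also have "\<dots> = 1/2 + 1/2 * T (Phi G) e"
      by (simp only: T_add[OF walsh_poly_const wP(1) that] T_const[OF that] T_cmult)
    finally show ?thesis .
  qed
  have "1/2 + 1/2 * mean (T (Phi G)) = mean (\<lambda>e. 1/2 + 1/2 * T (Phi G) e)"
    by (simp only: mean_add[OF walsh_poly_const wP(2)] mean_const mean_cmult)
  also have "\<dots> = mean (T (indicator A))"
    by (rule mean_cong) (simp add: T_ind)
  also have "\<dots> = mean (indicator A)"
    using rho_inv A unfolding mean_def by blast
  also have "\<dots> = mean (\<lambda>e. 1/2 + 1/2 * Phi G e)"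
    by (rule mean_cong) (simp add: ind)
  also have "\<dots> = 1/2 + 1/2 * mean (Phi G)"
    by (simp only: mean_add[OF walsh_poly_const wP(1)] mean_const mean_cmult)
  finally show ?thesis by simp
qed

lemma mean_T:
  assumes "walsh_poly g"
  shows "mean (T g) = mean g"
proof -
  obtain F a where F: "walsh_expansion F a g" using assms unfolding walsh_poly_def by blast
  have fin: "finite F" "\<forall>G\<in>F. finite G" using F unfolding walsh_expansion_def by auto
  have "mean (T g) = mean (\<lambda>e. \<Sum>G\<in>F. a G * T (Phi G) e)"
    by (rule mean_cong) (simp add: T_walsh_expansion[OF F])
  also have "\<dots> = (\<Sum>G\<in>F. a G * mean (Phi G))"
    using fin by (simp add: mean_sum mean_cmult mean_T_Phi walsh_poly_cmult walsh_poly_T_Phi)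
  also have "\<dots> = mean (\<lambda>e. \<Sum>G\<in>F. a G * Phi G e)"
    using fin by (simp add: mean_sum mean_cmult walsh_poly_cmult walsh_poly_Phi)
  also have "\<dots> = mean g"
    by (rule mean_cong) (use F in \<open>simp add: walsh_expansion_def\<close>)
  finally show ?thesis .
qed

lemma normM_T_le:
  assumes "walsh_poly g"
  shows "normM M (T g) \<le> \<bar>mean g\<bar> + mubar * normM M (\<lambda>e. g e - mean g)"
proof -
  let ?g0 = "\<lambda>e. g e - mean g"
  have w0: "walsh_poly ?g0" using assms by (intro walsh_poly_diff walsh_poly_const)
  have "\<forall>e\<in>spin_configs. T g e = mean g + T ?g0 e"
    using assms w0 T_add[of ?g0 "\<lambda>_. mean g"] by (simp add: walsh_poly_const T_const T_cong[of g])
  then have "normM M (T g) = normM M (\<lambda>e. mean g + T ?g0 e)" by (rule normM_cong)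
  also have "\<dots> \<le> \<bar>mean g\<bar> + normM M (T ?g0)"
    using normM_add_le[OF walsh_poly_const walsh_poly_T[OF w0]] M by (simp add: normM_const)
  also have "\<dots> \<le> \<bar>mean g\<bar> + mubar * normM M ?g0"
    using normM_T_le_contraction[OF w0 mean_centred[OF assms]] by simp
  finally show ?thesis .
qed

text \<open>The stationary density rho is not assumed flip invariant.  The flipped measure is
  stationary as well, and the contraction forces it to agree with rho on Walsh polynomials.\<close>

lemma mean_flip_refl_T:
  assumes "walsh_poly g"
  shows "mean (\<lambda>e. T g (flip_refl e)) = mean (\<lambda>e. g (flip_refl e))"
proof -
  have "mean (\<lambda>e. T g (flip_refl e)) = mean (T (\<lambda>e. g (flip_refl e)))"
    by (rule mean_cong) (simp add: T_flip_refl[OF assms])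
  also have "\<dots> = mean (\<lambda>e. g (flip_refl e))"
    by (rule mean_T[OF walsh_poly_flip_refl[OF assms]])
  finally show ?thesis .
qed

lemma abs_mean_flip_refl_le:
  assumes "walsh_poly g" "mean g = 0"
  shows "\<bar>mean (\<lambda>e. g (flip_refl e))\<bar> \<le> mubar ^ k * normM M g"
  using assms
proof (induction k arbitrary: g)
  case 0
  then show ?case
    using M by (auto intro!: abs_mean_le walsh_poly_flip_refl abs_le_normM flip_refl_in_spin_configs)
next
  case (Suc k)
  have "\<bar>mean (\<lambda>e. g (flip_refl e))\<bar> = \<bar>mean (\<lambda>e. T g (flip_refl e))\<bar>"
    by (simp add: mean_flip_refl_T[OF Suc.prems(1)])
  also have "\<dots> \<le> mubar ^ k * normM M (T g)"
    using Suc by (simp add: walsh_poly_T mean_T)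
  also have "\<dots> \<le> mubar ^ k * (mubar * normM M g)"
    using normM_T_le_contraction[OF Suc.prems] mubar by (intro mult_left_mono) auto
  finally show ?case by (simp add: mult_ac)
qed

lemma mean_flip_refl:
  assumes "walsh_poly g"
  shows "mean (\<lambda>e. g (flip_refl e)) = mean g"
proof -
  let ?g0 = "\<lambda>e. g e - mean g"
  have w0: "walsh_poly ?g0" using assms by (intro walsh_poly_diff walsh_poly_const)
  have "(\<lambda>k. mubar ^ k * normM M ?g0) \<longlonglongrightarrow> 0"
    using mubar by (intro tendsto_mult_left_zero LIMSEQ_power_zero) simp
  then have "\<bar>mean (\<lambda>e. ?g0 (flip_refl e))\<bar> \<le> 0"
    using abs_mean_flip_refl_le[OF w0 mean_centred[OF assms]] by (intro LIMSEQ_le_const) auto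
  moreover have "mean (\<lambda>e. ?g0 (flip_refl e)) = mean (\<lambda>e. g (flip_refl e)) - mean g"
    using mean_add[OF walsh_poly_flip_refl[OF assms] walsh_poly_const, of "- mean g"]
    by (simp add: mean_const)
  ultimately show ?thesis by simp
qed

lemma mean_eq_zero_if_odd:
  assumes "walsh_poly g" "flip_parity g (-1)"
  shows "mean g = 0"
proof -
  have "mean g = mean (\<lambda>e. (-1) * g e)"
    using mean_flip_refl[OF assms(1)] assms(2) mean_cong[of "\<lambda>e. g (flip_refl e)" "\<lambda>e. (-1) * g e"]
    by (simp add: flip_parity_def)
  then show ?thesis by (simp add: mean_cmult[of "-1", simplified])
qed

end

lemma bij_betw_Suc_vimage: "bij_betw Suc (Suc -` \<gamma>) (\<gamma> - {0})"
  by (rule bij_betw_byWitness[of _ "\<lambda>t. t - 1"]) auto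

lemma prod_Suc_vimage:
  fixes \<gamma> :: "nat set"
  assumes "finite \<gamma>"
  shows "(\<Prod>t\<in>\<gamma>. f t) = (if 0 \<in> \<gamma> then f 0 else 1) * (\<Prod>t\<in>Suc -` \<gamma>. f (Suc t))"
  using assms prod.reindex_bij_betw[OF bij_betw_Suc_vimage, of f \<gamma>]
  by (cases "0 \<in> \<gamma>") (simp_all add: prod.remove)

lemma card_Suc_vimage:
  fixes \<gamma> :: "nat set"
  assumes "finite \<gamma>"
  shows "card \<gamma> = (if 0 \<in> \<gamma> then Suc (card (Suc -` \<gamma>)) else card (Suc -` \<gamma>))"
proof -
  have "card (Suc -` \<gamma>) = card (\<gamma> - {0})" by (rule bij_betw_same_card[OF bij_betw_Suc_vimage])
  moreover have "card \<gamma> = (if 0 \<in> \<gamma> then Suc (card (\<gamma> - {0})) else card (\<gamma> - {0}))"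
    using card.remove[OF assms] by auto
  ultimately show ?thesis by (simp only:)
qed

lemma sum_power_card_Pow:
  fixes x :: "'a::comm_semiring_1"
  shows "finite A \<Longrightarrow> (\<Sum>X\<in>Pow A. x ^ card X) = (1 + x) ^ card A"
  using prod_add[of A "\<lambda>_. x" "\<lambda>_. 1"] by (simp add: add.commute)

context env_walk
begin

lemma pathE_cmult: "pathE T n (\<lambda>w. k * F w) eta = k * pathE T n F eta"
  by (induction n arbitrary: F eta) (simp_all add: T_cmult)

definition G_Psi :: "nat \<Rightarrow> nat set \<Rightarrow> (int^'d \<Rightarrow> real) \<Rightarrow> real" where
  "G_Psi n \<gamma> = pathE T n (\<lambda>w. \<Prod>t\<in>\<gamma>. w t 0)"

lemma G_Psi_0: "G_Psi 0 \<gamma> = (\<lambda>eta. eta 0 ^ card \<gamma>)"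
  by (simp add: G_Psi_def fun_eq_iff)

lemma G_Psi_Suc:
  assumes "finite \<gamma>"
  shows "G_Psi (Suc n) \<gamma> = (\<lambda>eta. (if 0 \<in> \<gamma> then eta 0 else 1) * T (G_Psi n (Suc -` \<gamma>)) eta)"
proof
  fix eta :: "int^'d \<Rightarrow> real"
  have "(\<lambda>w. \<Prod>t\<in>\<gamma>. case_nat eta w t 0) = (\<lambda>w. (if 0 \<in> \<gamma> then eta 0 else 1) * (\<Prod>t\<in>Suc -` \<gamma>. w t 0))"
    by (simp add: prod_Suc_vimage[OF assms])
  then show "G_Psi (Suc n) \<gamma> eta = (if 0 \<in> \<gamma> then eta 0 else 1) * T (G_Psi n (Suc -` \<gamma>)) eta"
    by (simp add: G_Psi_def pathE_cmult T_cmult)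
qed

lemma walsh_poly_G_Psi: "finite \<gamma> \<Longrightarrow> walsh_poly (G_Psi n \<gamma>)"
proof (induction n arbitrary: \<gamma>)
  case 0
  then show ?case by (simp add: G_Psi_0 walsh_poly_spin_power)
next
  case (Suc n)
  then have "walsh_poly (T (G_Psi n (Suc -` \<gamma>)))"
    by (intro walsh_poly_T Suc.IH finite_vimageI) auto
  then show ?case
    by (cases "0 \<in> \<gamma>") (simp_all add: G_Psi_Suc[OF Suc.prems] walsh_poly_mult_spin)
qed

lemma flip_parity_G_Psi: "finite \<gamma> \<Longrightarrow> flip_parity (G_Psi n \<gamma>) ((-1) ^ card \<gamma>)"
proof (induction n arbitrary: \<gamma>)
  case 0
  show ?case unfolding flip_parity_def
  proof
    fix e :: "int^'d \<Rightarrow> real"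
    have "G_Psi 0 \<gamma> (flip_refl e) = (- e 0) ^ card \<gamma>" by (simp add: G_Psi_0 flip_refl_def)
    then show "G_Psi 0 \<gamma> (flip_refl e) = (-1) ^ card \<gamma> * G_Psi 0 \<gamma> e"
      by (simp add: G_Psi_0 power_minus[of "e 0"])
  qed
next
  case (Suc n)
  let ?\<gamma>' = "Suc -` \<gamma>"
  have fin: "finite ?\<gamma>'" using Suc.prems by (intro finite_vimageI) auto
  have "flip_parity (T (G_Psi n ?\<gamma>')) ((-1) ^ card ?\<gamma>')"
    by (rule flip_parity_T[OF walsh_poly_G_Psi[OF fin] Suc.IH[OF fin]])
  note parity = this
  show ?case
  proof (cases "0 \<in> \<gamma>")
    case True
    then have "card \<gamma> = Suc (card ?\<gamma>')" using card_Suc_vimage[OF Suc.prems] by simp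
    then show ?thesis using flip_parity_mult_spin0[OF parity] True by (simp add: G_Psi_Suc[OF Suc.prems])
  next
    case False
    then have "card \<gamma> = card ?\<gamma>'" using card_Suc_vimage[OF Suc.prems] by simp
    then show ?thesis using parity False by (simp add: G_Psi_Suc[OF Suc.prems])
  qed
qed

lemma pathE_walsh_sum:
  assumes "eta \<in> spin_configs" "finite I" "\<forall>i\<in>I. finite (\<gamma> i)"
  shows "pathE T n (\<lambda>w. \<Sum>i\<in>I. a i * (\<Prod>t\<in>\<gamma> i. w t 0)) eta = (\<Sum>i\<in>I. a i * G_Psi n (\<gamma> i) eta)"
  using assms
proof (induction n arbitrary: a \<gamma> eta)
  case 0
  then show ?case by (simp add: G_Psi_def)
next
  case (Suc n)
  define b where "b i = a i * (if 0 \<in> \<gamma> i then eta 0 else 1)" for i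
  have "(\<lambda>w. \<Sum>i\<in>I. a i * (\<Prod>t\<in>\<gamma> i. case_nat eta w t 0))
      = (\<lambda>w. \<Sum>i\<in>I. b i * (\<Prod>t\<in>Suc -` \<gamma> i. w t 0))"
    using Suc.prems by (intro ext sum.cong refl) (simp add: prod_Suc_vimage b_def)
  then have "pathE T (Suc n) (\<lambda>w. \<Sum>i\<in>I. a i * (\<Prod>t\<in>\<gamma> i. w t 0)) eta
      = T (\<lambda>eta'. pathE T n (\<lambda>w. \<Sum>i\<in>I. b i * (\<Prod>t\<in>Suc -` \<gamma> i. w t 0)) eta') eta"
    by simp
  also have "\<dots> = T (\<lambda>eta'. \<Sum>i\<in>I. b i * G_Psi n (Suc -` \<gamma> i) eta') eta"
    using Suc.prems by (intro T_cong ballI Suc.IH) (auto intro: finite_vimageI)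
  also have "\<dots> = (\<Sum>i\<in>I. b i * T (G_Psi n (Suc -` \<gamma> i)) eta)"
    using Suc.prems by (intro T_linear) (auto intro!: walsh_poly_G_Psi finite_vimageI)
  also have "\<dots> = (\<Sum>i\<in>I. a i * G_Psi (Suc n) (\<gamma> i) eta)"
    using Suc.prems by (intro sum.cong refl) (simp add: G_Psi_Suc b_def)
  finally show ?case .
qed

lemma Gf_eq_sum_G_Psi:
  assumes "m \<ge> 1" "eta \<in> spin_configs"
  shows "Gf T m fc eta = (\<Sum>\<gamma>\<in>Pow {..<m}. fc \<gamma> * G_Psi (m - 1) \<gamma> eta)"
  unfolding Gf_def using assms(2) by (rule pathE_walsh_sum[where \<gamma>="\<lambda>\<gamma>. \<gamma>"]) (auto intro: finite_subset)

end

context env_walk_stationary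
begin

lemma mean_G_Psi_odd: "finite \<gamma> \<Longrightarrow> odd (card \<gamma>) \<Longrightarrow> mean (G_Psi n \<gamma>) = 0"
  using flip_parity_G_Psi[of \<gamma> n] by (intro mean_eq_zero_if_odd walsh_poly_G_Psi) auto

text \<open>Two consecutive spin factors cost mu_star^2 = (M mubar) (M (1 + 2 mubar)): multiplying
  an odd term costs M mubar, an even one M (1 + 2 mubar).  odd_const rescales the odd terms so
  that each step costs exactly mu_star.\<close>

definition mu_star :: real where
  "mu_star = M * sqrt (mubar * (1 + 2 * mubar))"

definition odd_const :: real where
  "odd_const = M * (1 + 2 * mubar) / mu_star"

lemma mu_star_pos: "mu_star > 0"
  unfolding mu_star_def using M mubar by simp

lemma odd_const_mult_mu_star: "odd_const * mu_star = M * (1 + 2 * mubar)"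
  unfolding odd_const_def using mu_star_pos by simp

lemma M_mult_mubar_mult_odd_const: "M * mubar * odd_const = mu_star"
proof -
  have "mu_star\<^sup>2 = M\<^sup>2 * (mubar * (1 + 2 * mubar))"
    unfolding mu_star_def using mubar by (simp add: power_mult_distrib)
  then show ?thesis
    unfolding odd_const_def using mu_star_pos by (simp add: field_simps power2_eq_square)
qed

definition centred_bound :: "((int^'d \<Rightarrow> real) \<Rightarrow> real) \<Rightarrow> real \<Rightarrow> bool" where
  "centred_bound g b \<longleftrightarrow> \<bar>mean g\<bar> \<le> b \<and> normM M (\<lambda>e. g e - mean g) \<le> 2 * b"

lemma normM_le_of_centred_bound:
  assumes "walsh_poly g" "centred_bound g b"
  shows "normM M g \<le> 3 * b"
proof -
  have "normM M (\<lambda>e. (g e - mean g) + mean g) \<le> normM M (\<lambda>e. g e - mean g) + normM M (\<lambda>_::int^'d \<Rightarrow> real. mean g)"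
    by (rule normM_add_le[OF walsh_poly_diff[OF assms(1) walsh_poly_const] walsh_poly_const]) (use M in simp)
  then have "normM M g \<le> normM M (\<lambda>e. g e - mean g) + \<bar>mean g\<bar>"
    by (simp add: normM_const)
  then show ?thesis using assms(2) unfolding centred_bound_def by simp
qed

lemma centred_bound_T:
  assumes "walsh_poly g" "centred_bound g b"
  shows "centred_bound (T g) b"
proof -
  have w0: "walsh_poly (\<lambda>e. g e - mean g)" using assms(1) by (intro walsh_poly_diff walsh_poly_const)
  have "normM M (\<lambda>e. T g e - mean (T g)) = normM M (T (\<lambda>e. g e - mean g))"
    by (rule normM_cong) (simp add: mean_T[OF assms(1)] T_diff_const[OF assms(1)])
  also have "\<dots> \<le> mubar * normM M (\<lambda>e. g e - mean g)"
    by (rule normM_T_le_contraction[OF w0 mean_centred[OF assms(1)]])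
  also have "\<dots> \<le> 2 * b"
    using assms(2) mubar normM_nonneg[of M] M unfolding centred_bound_def
    by (intro order_trans[OF mult_left_le_one_le]) auto
  finally show ?thesis
    using assms(2) unfolding centred_bound_def by (simp add: mean_T[OF assms(1)])
qed

lemma normM_T_le_of_mean_zero:
  assumes "walsh_poly g" "mean g = 0"
  shows "normM M (T g) \<le> normM M g"
proof -
  have "normM M (T g) \<le> mubar * normM M g" by (rule normM_T_le_contraction[OF assms])
  also have "\<dots> \<le> normM M g"
    using normM_nonneg[of M g] M mubar by (intro mult_left_le_one_le) auto
  finally show ?thesis .
qed

lemma centred_bound_spin0_T:
  assumes "walsh_poly g" "mean g = 0" "normM M g \<le> odd_const * b"
  shows "centred_bound (\<lambda>e. e 0 * T g e) (mu_star * b)"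
proof -
  let ?h = "\<lambda>e. e 0 * T g e"
  have wh: "walsh_poly ?h" by (intro walsh_poly_mult_spin walsh_poly_T assms(1))
  have "normM M ?h \<le> M * normM M (T g)"
    using M by (intro normM_mult_spin_le walsh_poly_T assms(1)) simp
  also have "\<dots> \<le> M * (mubar * (odd_const * b))"
  proof (rule mult_left_mono)
    have "normM M (T g) \<le> mubar * normM M g" by (rule normM_T_le_contraction[OF assms(1,2)])
    also have "\<dots> \<le> mubar * (odd_const * b)" using assms(3) mubar by (intro mult_left_mono) auto
    finally show "normM M (T g) \<le> mubar * (odd_const * b)" .
  qed (use M in simp)
  also have "\<dots> = mu_star * b"
    using M_mult_mubar_mult_odd_const by (simp add: mult_ac)
  finally have h: "normM M ?h \<le> mu_star * b" .
  have m: "\<bar>mean ?h\<bar> \<le> mu_star * b" using abs_mean_le_normM[OF wh] h by simp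
  have "normM M (\<lambda>e. ?h e - mean ?h) \<le> normM M ?h + \<bar>mean ?h\<bar>"
    using normM_diff_le[OF wh walsh_poly_const] M by (simp add: normM_const)
  then show ?thesis using h m unfolding centred_bound_def by simp
qed

lemma normM_spin0_T_le:
  assumes "walsh_poly g" "centred_bound g b"
  shows "normM M (\<lambda>e. e 0 * T g e) \<le> odd_const * (mu_star * b)"
proof -
  have "normM M (\<lambda>e. e 0 * T g e) \<le> M * normM M (T g)"
    using M by (intro normM_mult_spin_le walsh_poly_T assms(1)) simp
  also have "\<dots> \<le> M * (\<bar>mean g\<bar> + mubar * normM M (\<lambda>e. g e - mean g))"
    using normM_T_le[OF assms(1)] M by (intro mult_left_mono) auto
  also have "\<dots> \<le> M * (b + mubar * (2 * b))"
    using assms(2) M mubar unfolding centred_bound_def by (intro mult_left_mono add_mono) auto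
  also have "\<dots> = odd_const * (mu_star * b)"
    using odd_const_mult_mu_star by (simp add: algebra_simps)
  finally show ?thesis .
qed

lemma G_Psi_bounds:
  assumes "\<gamma> \<subseteq> {..n}"
  shows "if even (card \<gamma>) then centred_bound (G_Psi n \<gamma>) (mu_star ^ card \<gamma>)
         else normM M (G_Psi n \<gamma>) \<le> odd_const * mu_star ^ card \<gamma>"
  using assms
proof (induction n arbitrary: \<gamma>)
  case 0
  then have "\<gamma> = {} \<or> \<gamma> = {0}" by auto
  then show ?case
  proof
    assume "\<gamma> = {}"
    then show ?thesis by (simp add: G_Psi_0 centred_bound_def mean_const normM_const)
  next
    assume "\<gamma> = {0}"
    moreover have "G_Psi 0 {0} = Phi {0}" by (simp add: G_Psi_0 Phi_def[abs_def])
    moreover have "normM M (Phi {0::int^'d}) \<le> odd_const * mu_star"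
      using odd_const_mult_mu_star M mubar by (simp add: normM_Phi)
    ultimately show ?thesis by simp
  qed
next
  case (Suc n)
  have fin: "finite \<gamma>" using Suc.prems finite_subset by blast
  let ?\<gamma>' = "Suc -` \<gamma>" and ?H = "G_Psi n (Suc -` \<gamma>)"
  have fin': "finite ?\<gamma>'" using fin by (intro finite_vimageI) auto
  have IH: "if even (card ?\<gamma>') then centred_bound ?H (mu_star ^ card ?\<gamma>')
      else normM M ?H \<le> odd_const * mu_star ^ card ?\<gamma>'"
    using Suc.prems by (intro Suc.IH) auto
  have wH: "walsh_poly ?H" by (rule walsh_poly_G_Psi[OF fin'])
  show ?case
  proof (cases "0 \<in> \<gamma>")
    case False
    then have "card \<gamma> = card ?\<gamma>'" using card_Suc_vimage[OF fin] by simp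
    then show ?thesis
      using IH mean_G_Psi_odd[OF fin', of n] False
      by (auto simp: G_Psi_Suc[OF fin] centred_bound_T[OF wH]
          intro: order_trans[OF normM_T_le_of_mean_zero[OF wH]])
  next
    case True
    then have "card \<gamma> = Suc (card ?\<gamma>')" using card_Suc_vimage[OF fin] by simp
    then show ?thesis
      using IH mean_G_Psi_odd[OF fin', of n] True
      by (auto simp: G_Psi_Suc[OF fin] centred_bound_spin0_T[OF wH] normM_spin0_T_le[OF wH])
  qed
qed

lemma normM_G_Psi_le:
  assumes "\<gamma> \<subseteq> {..n}"
  shows "normM M (G_Psi n \<gamma>) \<le> max 3 odd_const * mu_star ^ card \<gamma>"
proof -
  have fin: "finite \<gamma>" using assms finite_subset by blast
  have "normM M (G_Psi n \<gamma>) \<le> (if even (card \<gamma>) then 3 else odd_const) * mu_star ^ card \<gamma>"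
    using G_Psi_bounds[OF assms] normM_le_of_centred_bound[OF walsh_poly_G_Psi[OF fin]]
    by (simp split: if_splits)
  also have "\<dots> \<le> max 3 odd_const * mu_star ^ card \<gamma>"
    using mu_star_pos by (intro mult_right_mono) auto
  finally show ?thesis .
qed

lemma Gf_bound:
  assumes "m \<ge> 1"
  shows "in_HM M (Gf T m fc) \<and>
    normM M (Gf T m fc) \<le> max 3 odd_const * Max ((\<lambda>\<gamma>. \<bar>fc \<gamma>\<bar>) ` Pow {..<m}) * (1 + mu_star) ^ m"
proof -
  let ?Mx = "Max ((\<lambda>\<gamma>. \<bar>fc \<gamma>\<bar>) ` Pow {..<m})"
  have summand: "walsh_poly (\<lambda>e. fc \<gamma> * G_Psi (m - 1) \<gamma> e)" if "\<gamma> \<in> Pow {..<m}" for \<gamma>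
    using that by (intro walsh_poly_cmult walsh_poly_G_Psi) (auto intro: finite_subset)
  have sum: "walsh_poly (\<lambda>e. \<Sum>\<gamma>\<in>Pow {..<m}. fc \<gamma> * G_Psi (m - 1) \<gamma> e)"
    using summand by (intro walsh_poly_sum) auto
  have eq: "\<forall>e\<in>spin_configs. Gf T m fc e = (\<Sum>\<gamma>\<in>Pow {..<m}. fc \<gamma> * G_Psi (m - 1) \<gamma> e)"
    using Gf_eq_sum_G_Psi[OF assms] by blast
  have "normM M (Gf T m fc) \<le> (\<Sum>\<gamma>\<in>Pow {..<m}. normM M (\<lambda>e. fc \<gamma> * G_Psi (m - 1) \<gamma> e))"
    unfolding normM_cong[OF eq] using summand M by (intro normM_sum_le) auto
  also have "\<dots> \<le> (\<Sum>\<gamma>\<in>Pow {..<m}. ?Mx * (max 3 odd_const * mu_star ^ card \<gamma>))"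
  proof (intro sum_mono)
    fix \<gamma> assume \<gamma>: "\<gamma> \<in> Pow {..<m}"
    then have "\<gamma> \<subseteq> {..m - 1}" using assms by auto
    moreover have "\<bar>fc \<gamma>\<bar> \<le> ?Mx" using \<gamma> by (intro Max_ge) auto
    moreover have "0 \<le> ?Mx" by (rule order_trans[OF abs_ge_zero[of "fc {}"] Max_ge]) auto
    ultimately have "\<bar>fc \<gamma>\<bar> * normM M (G_Psi (m - 1) \<gamma>) \<le> ?Mx * (max 3 odd_const * mu_star ^ card \<gamma>)"
      using M by (intro mult_mono normM_G_Psi_le normM_nonneg) auto
    then show "normM M (\<lambda>e. fc \<gamma> * G_Psi (m - 1) \<gamma> e) \<le> ?Mx * (max 3 odd_const * mu_star ^ card \<gamma>)"
      using \<gamma> by (simp add: normM_cmult walsh_poly_G_Psi finite_subset)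
  qed
  also have "\<dots> = max 3 odd_const * ?Mx * (1 + mu_star) ^ m"
    by (simp add: sum_distrib_left[symmetric] sum_power_card_Pow)
  finally show ?thesis
    using in_HM_walsh_poly[OF walsh_poly_cong[OF sum eq]] by simp
qed

end

theorem lemma1:
  fixes P0 c :: "int^'d \<Rightarrow> real" and eps M mubar B :: real
    and Q0 Q1 :: "real \<Rightarrow> real \<Rightarrow> real" and rho :: "(int^'d \<Rightarrow> real) \<Rightarrow> real"
  defines "T \<equiv> Top P0 c eps Q0 Q1"
  assumes eps: "eps > 0"
    and P0_nonneg: "\<forall>u. 0 \<le> P0 u"
    and P0_fin: "finite {u. P0 u \<noteq> 0}"
    and P0_sum: "(\<Sum>u\<in>{u. P0 u \<noteq> 0}. P0 u) = 1"
    and P0_even: "\<forall>u. P0 (- u) = P0 u"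
    and P0_aper: "\<forall>lam. (\<forall>i. - pi < lam $ i \<and> lam $ i \<le> pi) \<longrightarrow>
                      (cmod (ptilde P0 lam) = 1 \<longleftrightarrow> lam = 0)"
    and P0_nz: "\<forall>lam. ptilde P0 lam \<noteq> 0"
    and P0_inv: "(\<lambda>k. cmod (fourier_coeff (\<lambda>lam. 1 / ptilde P0 lam) k)) summable_on UNIV"
    and c_odd: "\<forall>u. c (- u) = - c u"
    and c_fin: "finite {u. c u \<noteq> 0}"
    and pc_range: "\<forall>u. 0 \<le> P0 u + eps * c u \<and> P0 u + eps * c u < 1 \<and>
                       0 \<le> P0 u - eps * c u \<and> P0 u - eps * c u < 1"
    and Q0: "sym_stoch Q0" and Q1: "sym_stoch Q1"
    and mu: "0 < \<bar>second_eig Q0\<bar>" "\<bar>second_eig Q0\<bar> < 1"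
    and M: "M > 1"
    and T_HM: "\<forall>f. in_HM M f \<longrightarrow> in_HM M (T f)"
    and rho_meas: "rho \<in> borel_measurable Pi0"
    and rho_bdd: "\<forall>eta. 0 \<le> rho eta \<and> rho eta \<le> B"
    and rho_prob: "(\<integral>eta. rho eta \<partial>Pi0) = 1"
    and rho_inv: "\<forall>A\<in>sets Pi0. (\<integral>eta. T (indicator A) eta * rho eta \<partial>Pi0)
                                  = (\<integral>eta. indicator A eta * rho eta \<partial>Pi0)"
    and mubar: "0 < mubar" "mubar < 1"
    and contr: "\<forall>f. in_HM M f \<and> (\<integral>eta. f eta * rho eta \<partial>Pi0) = 0
                      \<longrightarrow> normM M (T f) \<le> mubar * normM M f"
  shows "\<exists>C>0. \<forall>m::nat. \<forall>fc :: nat set \<Rightarrow> real. m \<ge> 1 \<longrightarrow>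
           in_HM M (Gf T m fc) \<and>
           normM M (Gf T m fc) \<le> C * Max ((\<lambda>\<gamma>. \<bar>fc \<gamma>\<bar>) ` Pow {..<m})
                                  * (1 + M * sqrt (mubar * (1 + 2 * mubar))) ^ m"
proof -
  interpret env_walk_stationary P0 c eps Q0 Q1 rho B M mubar
    by unfold_locales
       (use P0_fin P0_sum P0_even c_odd c_fin Q0 Q1 rho_meas rho_bdd rho_prob rho_inv M mubar contr
         in \<open>simp_all add: T_def\<close>)
  show ?thesis
  proof (intro exI[of _ "max 3 odd_const"] conjI allI impI)
    fix m :: nat and fc :: "nat set \<Rightarrow> real"
    assume "1 \<le> m"
    then show "in_HM M (Gf T m fc)"
      and "normM M (Gf T m fc) \<le> max 3 odd_const * Max ((\<lambda>\<gamma>. \<bar>fc \<gamma>\<bar>) ` Pow {..<m})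
             * (1 + M * sqrt (mubar * (1 + 2 * mubar))) ^ m"
      using Gf_bound[of m fc] unfolding T_def mu_star_def by auto
  qed simp
qed

end
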